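(* Let $E$ be a real vector space and $F$ a non-degenerate real vector space. Let $r\ge 1$ and let $A,B:E^r\to F$ be symmetric $r$-linear maps. If the function $f_A-f_B:E\to F$ is constant on some subset $U\subseteq E$ with $\mathrm{Star}^r(U,E)\neq\emptyset$, then $A=B$.
   Context: No topology is assumed on $E$ or $F$, and $A,B$ need not be continuous. For a symmetric $r$-linear map $A:E^r\to F$, its monomial function is $f_A:E\to F$, $f_A(x)=A(x,x,\dots,x)$. A real vector space $F$ is called non-degenerate if for every nonzero $v\in F$ there is a linear functional $\lambda:F\to\mathbb R$ with $\lambda(v)\neq 0$. For $U\subseteq E$, $\mathrm{Star}(U,E)$ is the set of $v\in U$ such that for every $w\in E$ there is $\delta_w>0$ with $v+tw\in U$ whenever $|t|\le\delta_w$. Set $\mathrm{Star}^1(U,E)=\mathrm{Star}(U,E)$ and $\mathrm{Star}^r(U,E)=\mathrm{Star}^{r-1}(\mathrm{Star}(U,E),E)$. *)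

theory Defs
  imports Complex_Main "HOL-Library.Multiset"
begin

text \<open>Maps E^r -> F are represented as functions on lists; only lists of length r matter.\<close>

definition multilinear_on :: "nat \<Rightarrow> ('a::real_vector list \<Rightarrow> 'b::real_vector) \<Rightarrow> bool" where
  "multilinear_on r A \<longleftrightarrow>
     (\<forall>xs i. length xs = r \<longrightarrow> i < r \<longrightarrow> linear (\<lambda>v. A (xs[i := v])))"

definition symmetric_on :: "nat \<Rightarrow> ('a list \<Rightarrow> 'b) \<Rightarrow> bool" where
  "symmetric_on r A \<longleftrightarrow>
     (\<forall>xs ys. length xs = r \<longrightarrow> mset ys = mset xs \<longrightarrow> A ys = A xs)"

definition sym_multilinear :: "nat \<Rightarrow> ('a::real_vector list \<Rightarrow> 'b::real_vector) \<Rightarrow> bool" where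
  "sym_multilinear r A \<longleftrightarrow> multilinear_on r A \<and> symmetric_on r A"

definition monomial_fun :: "nat \<Rightarrow> ('a list \<Rightarrow> 'b) \<Rightarrow> 'a \<Rightarrow> 'b" where
  "monomial_fun r A x = A (replicate r x)"

definition nondegenerate :: "'b::real_vector itself \<Rightarrow> bool" where
  "nondegenerate _ \<longleftrightarrow>
     (\<forall>v::'b. v \<noteq> 0 \<longrightarrow> (\<exists>l::'b \<Rightarrow> real. linear l \<and> l v \<noteq> 0))"

definition Star :: "'a::real_vector set \<Rightarrow> 'a set" where
  "Star U = {v \<in> U. \<forall>w. \<exists>\<delta>>0. \<forall>t::real. \<bar>t\<bar> \<le> \<delta> \<longrightarrow> v + t *\<^sub>R w \<in> U}"

definition Star_pow :: "nat \<Rightarrow> 'a::real_vector set \<Rightarrow> 'a set" where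
  "Star_pow r U = (Star ^^ r) U"

end

theory Submission imports Defs begin

text \<open>Put \<open>C = A - B\<close>; only a point \<open>p \<in> Star U \<supseteq> Star\<^sup>r U\<close> is needed.
  For each direction \<open>w\<close>, \<open>t \<mapsto> f\<^sub>C (p + t w)\<close> is a vector polynomial of degree \<open>r\<close> with
  leading coefficient \<open>f\<^sub>C w\<close>; it is constant for small \<open>|t|\<close>, and since linear functionals
  separate the points of \<open>F\<close>, all its non-constant coefficients vanish. Hence \<open>f\<^sub>C = 0\<close>,
  and polarization recovers \<open>C = 0\<close>: the linear coefficient of \<open>t \<mapsto> f\<^sub>C (x + t y)\<close> is
  \<open>r C(y, x, \<dots>, x)\<close>, so \<open>C(y, \<dots>)\<close> has vanishing monomial function, and we induct on \<open>r\<close>.\<close>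

lemma real_polyfun_const_on_infinite_imp_coeffs_eq_0:
  fixes c :: "nat \<Rightarrow> real"
  assumes "infinite S" and "\<And>t. t \<in> S \<Longrightarrow> (\<Sum>i\<le>n. c i * t^i) = d"
    and "1 \<le> k" "k \<le> n"
  shows "c k = 0"
proof -
  define e where "e i = c i - (if i = 0 then d else 0)" for i
  have "(\<Sum>i\<le>n. e i * t^i) = (\<Sum>i\<le>n. c i * t^i - (if i = 0 then d else 0))" for t
    by (rule sum.cong) (auto simp: e_def left_diff_distrib)
  also have "\<dots> t = (\<Sum>i\<le>n. c i * t^i) - d" for t
    by (simp add: sum_subtractf)
  finally have "(\<Sum>i\<le>n. e i * t^i) = (\<Sum>i\<le>n. c i * t^i) - d" for t .
  then have "S \<subseteq> {t. (\<Sum>i\<le>n. e i * t^i) = 0}"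
    using assms(2) by auto
  then have "infinite {t. (\<Sum>i\<le>n. e i * t^i) = 0}"
    using assms(1) finite_subset by blast
  then show ?thesis
    using polyfun_finite_roots assms(3,4) by (fastforce simp: e_def)
qed

lemma vector_polyfun_const_on_infinite_imp_coeffs_eq_0:
  fixes c :: "nat \<Rightarrow> 'b::real_vector"
  assumes "nondegenerate TYPE('b)" and "infinite S"
    and "\<And>t. t \<in> S \<Longrightarrow> (\<Sum>i\<le>n. t^i *\<^sub>R c i) = d"
    and "1 \<le> k" "k \<le> n"
  shows "c k = 0"
proof (rule ccontr)
  assume "c k \<noteq> 0"
  then obtain l :: "'b \<Rightarrow> real" where l: "linear l" "l (c k) \<noteq> 0"
    using assms(1) unfolding nondegenerate_def by blast
  have "(\<Sum>i\<le>n. l (c i) * t^i) = l d" if "t \<in> S" for t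
    using arg_cong[OF assms(3)[OF that], of l] l(1)
    by (simp add: linear_sum linear_scale mult.commute)
  then have "l (c k) = 0"
    using real_polyfun_const_on_infinite_imp_coeffs_eq_0[OF assms(2), where c = "\<lambda>i. l (c i)"] assms(4,5)
    by blast
  with l(2) show False by simp
qed

lemma sym_multilinear_diff:
  assumes "sym_multilinear r A" and "sym_multilinear r B"
  shows "sym_multilinear r (\<lambda>xs. A xs - B xs)"
  using assms real_vector.linear_compose_sub
  unfolding sym_multilinear_def multilinear_on_def symmetric_on_def by metis

lemma sym_multilinear_fix_head:
  assumes "sym_multilinear (Suc n) C"
  shows "sym_multilinear n (\<lambda>zs. C (y # zs))"
proof -
  have ml: "multilinear_on (Suc n) C" and sym: "symmetric_on (Suc n) C"
    using assms unfolding sym_multilinear_def by auto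
  have "linear (\<lambda>v. C (y # xs[i := v]))" if "length xs = n" "i < n" for xs i
    using ml[unfolded multilinear_on_def, rule_format, of "y # xs" "Suc i"] that by simp
  moreover have "C (y # ys) = C (y # xs)" if "length xs = n" "mset ys = mset xs" for xs ys
    using sym[unfolded symmetric_on_def, rule_format, of "y # xs" "y # ys"] that by simp
  ultimately show ?thesis
    unfolding sym_multilinear_def multilinear_on_def symmetric_on_def by blast
qed

lemma sym_multilinear_head_add_scaleR:
  assumes "sym_multilinear (Suc n) C" and "length zs = n"
  shows "C ((u + t *\<^sub>R v) # zs) = C (u # zs) + t *\<^sub>R C (v # zs)"
proof -
  have "multilinear_on (Suc n) C"
    using assms(1) unfolding sym_multilinear_def by simp
  then have lin: "linear (\<lambda>w. C (w # zs))"
    using assms(2) unfolding multilinear_on_def by (auto dest!: spec[of _ "u # zs"] spec[of _ 0])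
  show ?thesis
    using real_vector.linear_add[OF lin] real_vector.linear_scale[OF lin] by simp
qed

text \<open>For \<open>n = 0\<close> the linear coefficient is \<open>0\<close>, so the truncated \<open>n - 1\<close> is harmless.\<close>

lemma sym_multilinear_replicate_expansion:
  assumes "sym_multilinear n C"
  shows "\<exists>c. (\<forall>t. C (replicate n (x + t *\<^sub>R y)) = (\<Sum>k\<le>n. t^k *\<^sub>R c k))
      \<and> c 0 = C (replicate n x) \<and> c 1 = real n *\<^sub>R C (y # replicate (n - 1) x)
      \<and> c n = C (replicate n y)"
  using assms
proof (induction n arbitrary: C)
  case 0
  show ?case
    by (rule exI[of _ "\<lambda>k. if k = 0 then C [] else 0"]) simp
next
  case (Suc n)
  obtain a where a: "\<forall>t. C (x # replicate n (x + t *\<^sub>R y)) = (\<Sum>k\<le>n. t^k *\<^sub>R a k)"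
      "a 0 = C (x # replicate n x)" "a 1 = real n *\<^sub>R C (x # y # replicate (n - 1) x)"
    using Suc.IH[OF sym_multilinear_fix_head[OF Suc.prems]] by blast
  obtain b where b: "\<forall>t. C (y # replicate n (x + t *\<^sub>R y)) = (\<Sum>k\<le>n. t^k *\<^sub>R b k)"
      "b 0 = C (y # replicate n x)" "b n = C (y # replicate n y)"
    using Suc.IH[OF sym_multilinear_fix_head[OF Suc.prems]] by blast
  define c where "c k = (if k \<le> n then a k else 0) + (if k = 0 then 0 else b (k - 1))" for k
  have "C (replicate (Suc n) (x + t *\<^sub>R y)) = (\<Sum>k\<le>Suc n. t^k *\<^sub>R c k)" for t
  proof -
    have "(\<Sum>k\<le>Suc n. t^k *\<^sub>R c k)
        = (\<Sum>k\<le>n. t^k *\<^sub>R a k) + (\<Sum>k\<le>Suc n. t^k *\<^sub>R (if k = 0 then 0 else b (k - 1)))"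
      by (simp add: c_def scaleR_add_right sum.distrib)
    also have "(\<Sum>k\<le>Suc n. t^k *\<^sub>R (if k = 0 then 0 else b (k - 1))) = t *\<^sub>R (\<Sum>k\<le>n. t^k *\<^sub>R b k)"
      by (subst sum.atMost_Suc_shift) (simp add: scaleR_sum_right)
    finally show ?thesis
      using a(1) b(1) sym_multilinear_head_add_scaleR[OF Suc.prems] by simp
  qed
  moreover have "c 1 = real (Suc n) *\<^sub>R C (y # replicate n x)"
  proof (cases n)
    case (Suc m)
    have "mset (x # y # replicate m x) = mset (y # replicate n x)"
      using Suc by simp
    then have "C (x # y # replicate m x) = C (y # replicate n x)"
      using Suc.prems Suc unfolding sym_multilinear_def symmetric_on_def
      by (metis length_Cons length_replicate)
    then show ?thesis
      using a(3) b(2) Suc by (simp add: c_def algebra_simps scaleR_2)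
  qed (simp add: c_def b(2))
  moreover have "c 0 = C (replicate (Suc n) x)"
    by (simp add: c_def a(2))
  moreover have "c (Suc n) = C (replicate (Suc n) y)"
    by (simp add: c_def b(3))
  ultimately show ?case by (metis diff_Suc_1)
qed

lemma sym_multilinear_eq_0_if_monomial_fun_eq_0:
  assumes "nondegenerate TYPE('b::real_vector)"
    and "sym_multilinear (Suc n) (C :: 'a::real_vector list \<Rightarrow> 'b)"
    and "\<And>w. monomial_fun (Suc n) C w = 0"
    and "length xs = Suc n"
  shows "C xs = 0"
  using assms(2-4)
proof (induction n arbitrary: C xs)
  case 0
  then obtain w where "xs = [w]" by (cases xs) auto
  then show ?case using 0 by (simp add: monomial_fun_def)
next
  case (Suc n)
  obtain y zs where xs: "xs = y # zs" and zs: "length zs = Suc n"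
    using Suc.prems(3) by (cases xs) auto
  have head_eq_0: "C (y # replicate (Suc n) x) = 0" for x
  proof -
    obtain c where c: "\<forall>t. C (replicate (Suc (Suc n)) (x + t *\<^sub>R y)) = (\<Sum>k\<le>Suc (Suc n). t^k *\<^sub>R c k)"
        "c 1 = real (Suc (Suc n)) *\<^sub>R C (y # replicate (Suc n) x)"
      using sym_multilinear_replicate_expansion[OF Suc.prems(1), of x y] by (auto simp del: sum.atMost_Suc)
    have "(\<Sum>k\<le>Suc (Suc n). t^k *\<^sub>R c k) = monomial_fun (Suc (Suc n)) C (x + t *\<^sub>R y)" for t
      using c(1) by (simp only: monomial_fun_def)
    then have "c 1 = 0"
      using vector_polyfun_const_on_infinite_imp_coeffs_eq_0[OF assms(1) infinite_UNIV_char_0,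
          of c "Suc (Suc n)" 0 1] Suc.prems(2) by (simp only:)
    then show ?thesis using c(2) by simp
  qed
  have "monomial_fun (Suc n) (\<lambda>zs. C (y # zs)) x = 0" for x
    unfolding monomial_fun_def by (rule head_eq_0)
  then show ?case
    using Suc.IH[OF sym_multilinear_fix_head[OF Suc.prems(1)] _ zs] xs by blast
qed

lemma Star_subset: "Star U \<subseteq> U"
  unfolding Star_def by auto

lemma Star_pow_subset_Star:
  assumes "r \<ge> 1"
  shows "Star_pow r U \<subseteq> Star U"
proof -
  obtain n where r: "r = Suc n" using assms by (cases r) auto
  have "(Star ^^ n) V \<subseteq> V" for V :: "'a set"
    by (induction n) (use Star_subset in auto)
  then show ?thesis unfolding Star_pow_def r funpow_Suc_right by simp
qed

lemma sym_multilinear_monomial_fun_eq_0_if_const_on: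
  assumes "nondegenerate TYPE('b::real_vector)" and "r \<ge> 1"
    and "sym_multilinear r (C :: 'a::real_vector list \<Rightarrow> 'b)"
    and "\<forall>x\<in>U. monomial_fun r C x = d" and "Star U \<noteq> {}"
  shows "monomial_fun r C w = 0"
proof -
  obtain p \<delta> where \<delta>: "\<delta> > 0" "\<And>t. \<bar>t\<bar> \<le> \<delta> \<Longrightarrow> p + t *\<^sub>R w \<in> U"
    using assms(5) unfolding Star_def by blast
  obtain c where c: "\<forall>t. C (replicate r (p + t *\<^sub>R w)) = (\<Sum>k\<le>r. t^k *\<^sub>R c k)"
      "c r = C (replicate r w)"
    using sym_multilinear_replicate_expansion[OF assms(3)] by blast
  have "infinite {-\<delta>..\<delta>}"
    using \<delta>(1) by simp
  moreover have "(\<Sum>k\<le>r. t^k *\<^sub>R c k) = d" if "t \<in> {-\<delta>..\<delta>}" for t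
    using c(1) \<delta>(2) assms(4)[unfolded monomial_fun_def] that by (metis abs_le_iff atLeastAtMost_iff minus_le_iff)
  ultimately have "c r = 0"
    using vector_polyfun_const_on_infinite_imp_coeffs_eq_0[OF assms(1)] assms(2) by blast
  then show ?thesis using c(2) by (simp add: monomial_fun_def)
qed

theorem mainTheorem1:
  fixes A B :: "'a::real_vector list \<Rightarrow> 'b::real_vector"
    and U :: "'a set" and r :: nat
  assumes "nondegenerate TYPE('b)"
    and "r \<ge> 1"
    and "sym_multilinear r A" and "sym_multilinear r B"
    and "\<exists>c. \<forall>x\<in>U. monomial_fun r A x - monomial_fun r B x = c"
    and "Star_pow r U \<noteq> {}"
  shows "\<forall>xs. length xs = r \<longrightarrow> A xs = B xs"
proof -
  define C where "C xs = A xs - B xs" for xs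
  have C: "sym_multilinear r C"
    unfolding C_def using sym_multilinear_diff assms(3,4) by blast
  obtain d where "\<forall>x\<in>U. monomial_fun r C x = d"
    using assms(5) by (auto simp: C_def monomial_fun_def)
  moreover have "Star U \<noteq> {}"
    using assms(6) Star_pow_subset_Star[OF assms(2)] by blast
  ultimately have "monomial_fun r C w = 0" for w
    using sym_multilinear_monomial_fun_eq_0_if_const_on[OF assms(1,2) C] by blast
  moreover obtain n where "r = Suc n"
    using assms(2) by (cases r) auto
  ultimately have "C xs = 0" if "length xs = r" for xs
    using sym_multilinear_eq_0_if_monomial_fun_eq_0[OF assms(1)] C that by blast
  then show ?thesis by (simp add: C_def)
qed

end
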